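(* Let $0<\theta<\pi$, let $P_\theta=\big(\frac{\theta+\sin\theta}{2},\cos^2\frac\theta2\big)$ (a point of $\Gamma_\theta$), and let $T_\theta$ be the tangent line to the curve $\Gamma_\theta$ at $P_\theta$. Then (1) $\inf_{P\in T_\theta\cap\mathcal{H}}d_H((0,1),P)=\theta$; and (2) $T_\theta$ is the line $x=\frac\theta2+v\tan\frac\theta2$, i.e. $T_\theta\cap\mathcal{H}=L_{\beta,\gamma}$ with $\beta=\frac\theta2$, $\gamma=\tan\frac\theta2$.
   Context: Let $\mathcal{H}=\{(x,v)\in\mathbb{R}^2:v\ge0\}$ and $d_H$ the Riemannian distance on $\mathcal{H}$ induced by $ds^2=v^{-1}(dx^2+dv^2)$ on the open upper half-plane (extended to the boundary). For $v\ge0$, $0<|\delta|<2\pi$, set $f(v,\delta)=\frac{(v+1)(\delta-\sin\delta)+2\sqrt v(2\sin\frac\delta2-\delta\cos\frac\delta2)}{2\sin^2\frac\delta2}$ and $f(v,0)=0$; $\delta(x,v)$ is the unique $\delta\in(-2\pi,2\pi)$ with $f(v,\delta)=x$, and $\Gamma_\theta=\{(x,v)\in\mathcal{H}:\delta(x,v)=\theta\}$. For $0<\theta<2\pi$, $\Gamma_\theta$ is the graph of a smooth function of $x$ on $[\frac{\theta-\sin\theta}{1-\cos\theta},\infty)$. $L_{\beta,\gamma}=\{(x,v)\in\mathcal{H}:x=\beta+\gamma v\}$. *)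

theory Defs
  imports "HOL-Analysis.Analysis"
begin

definition Hplane :: "(real \<times> real) set" where
  "Hplane = {p. snd p \<ge> 0}"

text \<open>Length of a curve g : [0,1] -> H for the metric ds^2 = v^{-1}(dx^2+dv^2),
  extended to the boundary v = 0 (moving along the boundary costs infinity,
  resting there costs nothing).\<close>
definition hlen :: "(real \<Rightarrow> real \<times> real) \<Rightarrow> ennreal" where
  "hlen g = (\<integral>\<^sup>+ t \<in> {0..1}.
      (let d = vector_derivative g (at t); v = snd (g t) in
        if v > 0 then ennreal (norm d / sqrt v)
        else if d = 0 then 0 else \<infinity>) \<partial>lborel)"

definition dH :: "real \<times> real \<Rightarrow> real \<times> real \<Rightarrow> ennreal" where
  "dH p q = (INF g \<in> {g. g piecewise_C1_differentiable_on {0..1} \<and> g 0 = p \<and> g 1 = q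
                          \<and> (\<forall>t\<in>{0..1}. g t \<in> Hplane)}. hlen g)"

definition fH :: "real \<Rightarrow> real \<Rightarrow> real" where
  "fH v d = (if d = 0 then 0 else
     ((v + 1) * (d - sin d) + 2 * sqrt v * (2 * sin (d/2) - d * cos (d/2)))
       / (2 * (sin (d/2))^2))"

definition deltaH :: "real \<times> real \<Rightarrow> real" where
  "deltaH p = (THE d. -2*pi < d \<and> d < 2*pi \<and> fH (snd p) d = fst p)"

definition Gamma :: "real \<Rightarrow> (real \<times> real) set" where
  "Gamma \<theta> = {p \<in> Hplane. deltaH p = \<theta>}"

text \<open>For 0 < theta < 2 pi, Gamma theta is the graph of a function of x; this is that function.\<close>
definition Gamma_fun :: "real \<Rightarrow> real \<Rightarrow> real" where
  "Gamma_fun \<theta> x = (THE v. (x, v) \<in> Gamma \<theta>)"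

definition Lline :: "real \<Rightarrow> real \<Rightarrow> (real \<times> real) set" where
  "Lline \<beta> \<gamma> = {(x, v). v \<ge> 0 \<and> x = \<beta> + \<gamma> * v}"

definition Ptheta :: "real \<Rightarrow> real \<times> real" where
  "Ptheta \<theta> = ((\<theta> + sin \<theta>) / 2, (cos (\<theta>/2))^2)"

definition tangent_line :: "real \<Rightarrow> (real \<times> real) set" where
  "tangent_line \<theta> = {(x, v). v = snd (Ptheta \<theta>)
      + deriv (Gamma_fun \<theta>) (fst (Ptheta \<theta>)) * (x - fst (Ptheta \<theta>))}"

end

theory Submission
  imports Defs "HOL-Real_Asymp.Real_Asymp"
begin

text \<open>Upper bound: the cycloid \<open>t \<mapsto> ((\<theta>t + sin \<theta>t)/2, (1 + cos \<theta>t)/2)\<close> runs from \<open>(0, 1)\<close> to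
  \<open>P\<^sub>\<theta>\<close>, which lies on \<open>L = L\<^bsub>\<theta>/2, tan(\<theta>/2)\<^esub>\<close>, with constant metric speed \<open>\<theta>\<close>.
  Lower bound: a calibration for \<open>L\<close>, i.e. a function \<open>D\<close> on the open half-plane with
  \<open>D(0, 1) = \<theta>\<close>, \<open>D = 0\<close> on \<open>L\<close> and gradient of metric length 1.  Along any curve \<open>D\<close> changes
  at most at the metric speed, so every curve from \<open>(0, 1)\<close> to \<open>L\<close> has length at least \<open>\<theta>\<close>;
  curves are lifted by \<open>\<epsilon>\<close> to stay away from \<open>v = 0\<close>, where \<open>D\<close> is not differentiable.
  The tangent line is a computation: \<open>f(v, \<cdot>)\<close> is strictly increasing on \<open>(-2\<pi>, 2\<pi>)\<close>, hence
  \<open>\<Gamma>\<^sub>\<theta> = {(a (r\<^sup>2 + 1) + b r, r\<^sup>2) | r \<ge> 0}\<close> with explicit \<open>a, b > 0\<close>, whose slope at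
  \<open>r = cos(\<theta>/2)\<close> is \<open>cot(\<theta>/2)\<close>.\<close>

lemma strict_mono_on_if_deriv_pos:
  fixes f :: "real \<Rightarrow> real"
  assumes "\<And>x. a < x \<Longrightarrow> x < b \<Longrightarrow> \<exists>y. (f has_real_derivative y) (at x) \<and> 0 < y"
  shows "strict_mono_on {a<..<b} f"
proof (rule strict_mono_onI)
  fix r s assume "r \<in> {a<..<b}" "s \<in> {a<..<b}" "r < s"
  then show "f r < f s"
    by (intro DERIV_pos_imp_increasing[OF \<open>r < s\<close>] assms) auto
qed

lemma sin_less_self:
  fixes u :: real
  assumes "0 < u"
  shows "sin u < u"
proof (cases "u < pi")
  case True
  have "(\<lambda>t. t - sin t) 0 < (\<lambda>t. t - sin t) u"
  proof (rule DERIV_pos_imp_increasing_open[OF assms])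
    fix t :: real assume "0 < t" "t < u"
    then have "cos t < 1" using True cos_monotone_0_pi[of 0 t] by simp
    then show "\<exists>y. ((\<lambda>t. t - sin t) has_real_derivative y) (at t) \<and> 0 < y"
      by (intro exI[of _ "1 - cos t"]) (auto intro!: derivative_eq_intros)
  qed (intro continuous_intros)
  then show ?thesis by simp
next
  case False
  then show ?thesis using sin_le_one[of u] pi_gt3 by linarith
qed

lemma mult_cos_less_sin:
  fixes u :: real
  assumes "0 < u" "u < pi"
  shows "u * cos u < sin u"
proof -
  have "(\<lambda>t. sin t - t * cos t) 0 < (\<lambda>t. sin t - t * cos t) u"
  proof (rule DERIV_pos_imp_increasing_open[OF assms(1)])
    fix t assume "0 < t" "t < u"
    then show "\<exists>y. ((\<lambda>t. sin t - t * cos t) has_real_derivative y) (at t) \<and> 0 < y"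
      using assms by (intro exI[of _ "t * sin t"]) (auto intro!: derivative_eq_intros mult_pos_pos sin_gt_zero)
  qed (intro continuous_intros)
  then show ?thesis by simp
qed

lemma IVT_open_interval:
  fixes f :: "real \<Rightarrow> real"
  assumes "a < b" and cont: "continuous_on {a<..<b} f"
    and below: "eventually (\<lambda>x. f x < y) (at_right a)"
    and above: "eventually (\<lambda>x. y < f x) (at_left b)"
  shows "\<exists>x\<in>{a<..<b}. f x = y"
proof -
  obtain c where c: "a < c" "\<And>z. a < z \<Longrightarrow> z < c \<Longrightarrow> f z < y"
    using below unfolding eventually_at_right_field by blast
  obtain d where d: "d < b" "\<And>z. d < z \<Longrightarrow> z < b \<Longrightarrow> y < f z"
    using above unfolding eventually_at_left_field by blast
  define m where "m = (a + b) / 2"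
  define r where "r = (a + min c m) / 2"
  define s where "s = (b + max d m) / 2"
  have "a < m" "m < b" using \<open>a < b\<close> unfolding m_def by auto
  then have "a < min c m" "min c m \<le> c" "min c m \<le> m" "m \<le> max d m" "d \<le> max d m" "max d m < b"
    using c(1) d(1) by auto
  then have rs: "a < r" "r < c" "r < s" "d < s" "s < b"
    unfolding r_def s_def by auto
  have "continuous_on {r..s} f"
    using rs by (intro continuous_on_subset[OF cont]) auto
  then obtain x where "r \<le> x" "x \<le> s" "f x = y"
    using IVT'[of f r y s] c(2)[of r] d(2)[of s] rs by force
  then show ?thesis using rs by auto
qed

definition hspeed :: "(real \<Rightarrow> real \<times> real) \<Rightarrow> real \<Rightarrow> ennreal" where
  "hspeed g t = (let d = vector_derivative g (at t); v = snd (g t) in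
      if v > 0 then ennreal (norm d / sqrt v) else if d = 0 then 0 else \<infinity>)"

lemma hlen_eq_nn_integral_hspeed: "hlen g = (\<integral>\<^sup>+ t \<in> {0..1}. hspeed g t \<partial>lborel)"
  unfolding hlen_def hspeed_def ..

lemma hspeed_ge_unit_rate:
  assumes "0 \<le> snd (g t)" "0 < \<epsilon>" "a\<^sup>2 + b\<^sup>2 = 1"
  shows "ennreal ((a * fst (vector_derivative g (at t)) + b * snd (vector_derivative g (at t)))
           / sqrt (snd (g t) + \<epsilon>)) \<le> hspeed g t"
proof -
  define d where "d = vector_derivative g (at t)"
  define v where "v = snd (g t)"
  consider "0 < v" | "v = 0" "d = 0" | "v = 0" "d \<noteq> 0" using assms(1) unfolding v_def by force
  then show ?thesis
  proof cases
    case 1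
    have "a * fst d + b * snd d \<le> norm (a, b) * norm d"
      using Cauchy_Schwarz_ineq2[of "(a, b)" d] by (cases d) (simp add: inner_Pair)
    also have "\<dots> = norm d" using assms(3) by (simp add: norm_Pair)
    finally have "(a * fst d + b * snd d) / sqrt (v + \<epsilon>) \<le> norm d / sqrt (v + \<epsilon>)"
      using 1 assms(2) by (simp add: divide_right_mono)
    also have "\<dots> \<le> norm d / sqrt v"
      using 1 assms(2) by (intro divide_left_mono) (auto intro: mult_pos_pos)
    finally show ?thesis
      using 1 unfolding hspeed_def Let_def d_def[symmetric] v_def[symmetric] by (simp add: ennreal_leI)
  next
    case 2
    then show ?thesis unfolding d_def v_def by simp
  next
    case 3
    then show ?thesis unfolding hspeed_def Let_def d_def[symmetric] v_def[symmetric] by simp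
  qed
qed

lemma has_integral_le_nn_integral:
  fixes f :: "real \<Rightarrow> real" and w :: "real \<Rightarrow> ennreal"
  assumes f: "(f has_integral I) {a..b}" and N: "finite N"
    and le: "\<And>x. x \<in> {a..b} - N \<Longrightarrow> ennreal (f x) \<le> w x"
  shows "ennreal I \<le> (\<integral>\<^sup>+ x \<in> {a..b}. w x \<partial>lborel)"
proof -
  define fi where "fi x = indicator {a..b} x * f x" for x
  define p where "p x = max (fi x) 0" for x
  have "fi = (\<lambda>x. if x \<in> {a..b} then f x else 0)" by (auto simp: fi_def indicator_def)
  then have fi_int: "(fi has_integral I) UNIV" using has_integral_restrict_UNIV[of "{a..b}" f I] f by simp
  have "(\<lambda>x. indicator {a..b} x *\<^sub>R f x) \<in> borel_measurable lebesgue"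
    by (rule has_integral_implies_lebesgue_measurable[OF f])
  then have "fi \<in> borel_measurable lebesgue" unfolding fi_def by simp
  then have p_meas: "p \<in> borel_measurable lebesgue" unfolding p_def by measurable
  have "AE x in lborel. x \<notin> N" using finite_imp_null_set_lborel[OF N] AE_not_in by blast
  then have p_le: "AE x in lborel. ennreal (p x) \<le> w x * indicator {a..b} x"
  proof (rule eventually_mono)
    fix x assume "x \<notin> N"
    then show "ennreal (p x) \<le> w x * indicator {a..b} x"
      using le[of x] by (cases "x \<in> {a..b}") (auto simp: p_def fi_def ennreal_neg max_def)
  qed
  show ?thesis
  proof (cases "(\<integral>\<^sup>+ x. ennreal (p x) \<partial>lborel) = \<infinity>")
    case True
    then show ?thesis using nn_integral_mono_AE[OF p_le] by (simp add: top_unique)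
  next
    case False
    then obtain r where r: "(\<integral>\<^sup>+ x. ennreal (p x) \<partial>lborel) = ennreal r" "0 \<le> r"
      by (cases "(\<integral>\<^sup>+ x. ennreal (p x) \<partial>lborel)" rule: ennreal_cases) auto
    then have "(p has_integral r) UNIV"
      using has_integral_iff_nn_integral_lebesgue[of p r] p_meas
      by (simp add: nn_integral_completion p_def)
    with fi_int have "I \<le> r" by (rule has_integral_le) (simp add: p_def)
    then show ?thesis using r nn_integral_mono_AE[OF p_le] by (metis ennreal_leI order_trans)
  qed
qed

lemma has_vector_derivative_fst:
  "(g has_vector_derivative d) F \<Longrightarrow> ((\<lambda>t. fst (g t)) has_real_derivative fst d) F"
  using has_derivative_fst[of g "\<lambda>h. h *\<^sub>R d" F]
  by (simp add: has_vector_derivative_def has_field_derivative_def mult_commute_abs)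

lemma has_vector_derivative_snd:
  "(g has_vector_derivative d) F \<Longrightarrow> ((\<lambda>t. snd (g t)) has_real_derivative snd d) F"
  using has_derivative_snd[of g "\<lambda>h. h *\<^sub>R d" F]
  by (simp add: has_vector_derivative_def has_field_derivative_def mult_commute_abs)

section \<open>Monotonicity of \<open>f\<close> in \<open>\<delta>\<close>\<close>

definition Pcoef :: "real \<Rightarrow> real" where
  "Pcoef u = (u - sin u * cos u) / (sin u)\<^sup>2"

definition Qcoef :: "real \<Rightarrow> real" where
  "Qcoef u = (sin u - u * cos u) / (sin u)\<^sup>2"

lemma fH_eq_coef:
  assumes "d \<noteq> 0"
  shows "fH v d = (v + 1) * Pcoef (d/2) + 2 * sqrt v * Qcoef (d/2)"
proof -
  have cancel2: "(a * (2 * p) + b * (2 * q)) / (2 * w) = a * (p / w) + b * (q / w)" for a b p q w :: real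
    by (simp add: add_divide_distrib)
  have "d - sin d = 2 * (d/2 - sin (d/2) * cos (d/2))" using sin_double[of "d/2"] by simp
  moreover have "2 * sin (d/2) - d * cos (d/2) = 2 * (sin (d/2) - d/2 * cos (d/2))" by simp
  ultimately show ?thesis
    unfolding fH_def Pcoef_def Qcoef_def using assms by (simp only: if_False cancel2)
qed

lemma Pcoef_pos:
  assumes "0 < u" "u < pi"
  shows "0 < Pcoef u"
proof -
  have "0 < sin u" using assms sin_gt_zero by blast
  moreover have "sin u * cos u < u"
  proof (cases "cos u \<le> 0")
    case True
    then show ?thesis using \<open>0 < sin u\<close> assms(1) mult_nonneg_nonpos[of "sin u" "cos u"] by linarith
  next
    case False
    then show ?thesis using \<open>0 < sin u\<close> sin_less_self[OF assms(1)] cos_le_one[of u]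
      by (smt (verit) mult_left_le)
  qed
  ultimately show ?thesis unfolding Pcoef_def by simp
qed

lemma Qcoef_pos: "0 < u \<Longrightarrow> u < pi \<Longrightarrow> 0 < Qcoef u"
  using mult_cos_less_sin[of u] sin_gt_zero[of u] unfolding Qcoef_def by simp

lemma Pcoef_has_derivative:
  "sin u \<noteq> 0 \<Longrightarrow> (Pcoef has_real_derivative 2 * (sin u - u * cos u) / (sin u)^3) (at u)"
  unfolding Pcoef_def[abs_def]
  apply (rule derivative_eq_intros refl)+
   apply simp
  by (simp add: divide_simps) (use sin_cos_squared_add[of u] in algebra)

lemma Qcoef_has_derivative:
  "sin u \<noteq> 0 \<Longrightarrow>
    (Qcoef has_real_derivative (u * (1 + (cos u)\<^sup>2) - 2 * sin u * cos u) / (sin u)^3) (at u)"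
  unfolding Qcoef_def[abs_def]
  apply (rule derivative_eq_intros refl)+
   apply simp
  by (simp add: divide_simps) (use sin_cos_squared_add[of u] in algebra)

lemma Qcoef_deriv_numerator_pos:
  assumes "0 < u" "u < pi"
  shows "0 < u * (1 + (cos u)\<^sup>2) - 2 * sin u * cos u"
proof (cases "cos u \<le> 0")
  case True
  then have "sin u * cos u \<le> 0" using sin_gt_zero[OF assms] by (simp add: mult_nonneg_nonpos)
  moreover have "0 < u * (1 + (cos u)\<^sup>2)" using assms by (simp add: add_pos_nonneg)
  ultimately show ?thesis by linarith
next
  case False
  have "0 \<le> u * (1 - cos u)\<^sup>2" using assms by simp
  then have "2 * u * cos u \<le> u * (1 + (cos u)\<^sup>2)" by (simp add: power2_eq_square algebra_simps)
  moreover have "2 * sin u * cos u < 2 * u * cos u"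
    using sin_less_self[OF assms(1)] False by simp
  ultimately show ?thesis by linarith
qed

lemma strict_mono_on_Pcoef: "strict_mono_on {0<..<pi} Pcoef"
proof (rule strict_mono_on_if_deriv_pos)
  fix t :: real assume "0 < t" "t < pi"
  then show "\<exists>y. (Pcoef has_real_derivative y) (at t) \<and> 0 < y"
    using Pcoef_has_derivative[of t] sin_gt_zero[of t] mult_cos_less_sin[of t] by force
qed

lemma strict_mono_on_Qcoef: "strict_mono_on {0<..<pi} Qcoef"
proof (rule strict_mono_on_if_deriv_pos)
  fix t :: real assume "0 < t" "t < pi"
  then show "\<exists>y. (Qcoef has_real_derivative y) (at t) \<and> 0 < y"
    using Qcoef_has_derivative[of t] sin_gt_zero[of t] Qcoef_deriv_numerator_pos[of t] by force
qed

lemma continuous_on_Pcoef: "continuous_on {0<..<pi} Pcoef"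
  unfolding Pcoef_def[abs_def] by (intro continuous_intros) (use sin_gt_zero in force)

lemma continuous_on_Qcoef: "continuous_on {0<..<pi} Qcoef"
  unfolding Qcoef_def[abs_def] by (intro continuous_intros) (use sin_gt_zero in force)

lemma Pcoef_tendsto_0: "(Pcoef \<longlongrightarrow> 0) (at_right 0)"
  unfolding Pcoef_def[abs_def] by real_asymp

lemma Qcoef_tendsto_0: "(Qcoef \<longlongrightarrow> 0) (at_right 0)"
  unfolding Qcoef_def[abs_def] by real_asymp

lemma Pcoef_at_top: "filterlim Pcoef at_top (at_left pi)"
  unfolding Pcoef_def[abs_def] by real_asymp

lemma fH_minus: "fH v (-d) = - fH v d"
proof -
  have "Pcoef (-u) = - Pcoef u" "Qcoef (-u) = - Qcoef u" for u
    by (simp_all add: Pcoef_def Qcoef_def minus_divide_left)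
  then show ?thesis
    by (cases "d = 0") (simp add: fH_def, simp add: fH_eq_coef)
qed

lemma fH_pos:
  assumes "0 \<le> v" "0 < d" "d < 2 * pi"
  shows "0 < fH v d"
  using Pcoef_pos[of "d/2"] Qcoef_pos[of "d/2"] fH_eq_coef[of d v] assms
  by (simp add: add_pos_nonneg)

lemma sgn_fH:
  assumes "0 \<le> v" "-2 * pi < d" "d < 2 * pi"
  shows "sgn (fH v d) = sgn d"
proof -
  consider "0 < d" | "d = 0" | "d < 0" by linarith
  then show ?thesis
  proof cases
    case 1
    then show ?thesis using fH_pos[of v d] assms by simp
  next
    case 2
    then show ?thesis by (simp add: fH_def)
  next
    case 3
    then show ?thesis using fH_pos[of v "-d"] fH_minus[of v d] assms by simp
  qed
qed

lemma strict_mono_on_fH_pos: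
  assumes "0 \<le> v"
  shows "strict_mono_on {0<..<2*pi} (fH v)"
proof (rule strict_mono_onI)
  fix d1 d2 assume d: "d1 \<in> {0<..<2*pi}" "d2 \<in> {0<..<2*pi}" "d1 < d2"
  then have "Pcoef (d1/2) < Pcoef (d2/2)" "Qcoef (d1/2) < Qcoef (d2/2)"
    using strict_mono_onD[OF strict_mono_on_Pcoef] strict_mono_onD[OF strict_mono_on_Qcoef] by auto
  then have "(v + 1) * Pcoef (d1/2) < (v + 1) * Pcoef (d2/2)"
    "2 * sqrt v * Qcoef (d1/2) \<le> 2 * sqrt v * Qcoef (d2/2)"
    using assms by (auto intro: mult_left_mono)
  then show "fH v d1 < fH v d2" using d fH_eq_coef[of d1 v] fH_eq_coef[of d2 v] by simp
qed

lemma strict_mono_on_fH: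
  assumes "0 \<le> v"
  shows "strict_mono_on {-2*pi<..<2*pi} (fH v)"
proof (rule strict_mono_onI)
  note on_pos = strict_mono_onD[OF strict_mono_on_fH_pos[OF assms]]
  fix d1 d2 assume d: "d1 \<in> {-2*pi<..<2*pi}" "d2 \<in> {-2*pi<..<2*pi}" "d1 < d2"
  consider "0 < d1" | "d2 < 0" | "d1 \<le> 0" "0 \<le> d2" by linarith
  then show "fH v d1 < fH v d2"
  proof cases
    case 1
    then show ?thesis using on_pos d by auto
  next
    case 2
    then show ?thesis using on_pos[of "-d2" "-d1"] fH_minus[of v] d by auto
  next
    case 3
    have "sgn (fH v d1) = sgn d1" "sgn (fH v d2) = sgn d2" using d sgn_fH[OF assms] by auto
    then have "fH v d1 \<le> 0" "0 \<le> fH v d2" "fH v d1 < 0 \<or> 0 < fH v d2"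
      using 3 \<open>d1 < d2\<close> by (metis sgn_le_0_iff, metis zero_le_sgn_iff, smt (verit) sgn_less sgn_greater)
    then show ?thesis by linarith
  qed
qed

lemma fH_attains_pos:
  assumes "0 \<le> v" "0 < y"
  shows "\<exists>d\<in>{0<..<2*pi}. fH v d = y"
proof -
  define F where "F u = (v + 1) * Pcoef u + 2 * sqrt v * Qcoef u" for u
  have "(F \<longlongrightarrow> (v + 1) * 0 + 2 * sqrt v * 0) (at_right 0)"
    unfolding F_def by (intro tendsto_intros Pcoef_tendsto_0 Qcoef_tendsto_0)
  then have below: "eventually (\<lambda>u. F u < y) (at_right 0)"
    using assms(2) by (simp add: order_tendstoD(2))
  have "eventually (\<lambda>u. 0 < u \<and> u < pi) (at_left pi)"
    unfolding eventually_at_left_field using pi_gt_zero by blast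
  moreover have "eventually (\<lambda>u. y < Pcoef u) (at_left pi)"
    using Pcoef_at_top by (simp add: filterlim_at_top_dense)
  ultimately have above: "eventually (\<lambda>u. y < F u) (at_left pi)"
  proof eventually_elim
    case (elim u)
    then have "0 < Pcoef u" "0 < Qcoef u" using Pcoef_pos Qcoef_pos by auto
    then have "Pcoef u \<le> F u" unfolding F_def using assms(1)
      by (simp add: add_increasing2 mult_le_cancel_right1)
    then show ?case using elim by linarith
  qed
  have "continuous_on {0<..<pi} F"
    unfolding F_def by (intro continuous_intros continuous_on_Pcoef continuous_on_Qcoef)
  then obtain u where "u \<in> {0<..<pi}" "F u = y"
    using IVT_open_interval[OF pi_gt_zero _ below above] by blast
  then show ?thesis using fH_eq_coef[of "2 * u" v] unfolding F_def by (intro bexI[of _ "2 * u"]) auto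
qed

lemma fH_surj:
  assumes "0 \<le> v"
  shows "\<exists>d\<in>{-2*pi<..<2*pi}. fH v d = x"
proof -
  consider "0 < x" | "x = 0" | "x < 0" by linarith
  then show ?thesis
  proof cases
    case 1
    then show ?thesis using fH_attains_pos[OF assms] by force
  next
    case 2
    then show ?thesis by (intro bexI[of _ 0]) (auto simp: fH_def)
  next
    case 3
    then obtain d where "d \<in> {0<..<2*pi}" "fH v d = -x" using fH_attains_pos[OF assms, of "-x"] by auto
    then show ?thesis using fH_minus[of v d] by (intro bexI[of _ "-d"]) auto
  qed
qed

lemma deltaH_eq_iff:
  assumes "0 \<le> v" "-2*pi < t" "t < 2*pi"
  shows "deltaH (x, v) = t \<longleftrightarrow> fH v t = x"
proof -
  have inj: "inj_on (fH v) {-2*pi<..<2*pi}"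
    using strict_mono_on_fH[OF assms(1)] by (rule strict_mono_on_imp_inj_on)
  obtain d where d: "d \<in> {-2*pi<..<2*pi}" "fH v d = x" using fH_surj[OF assms(1)] by blast
  then have "deltaH (x, v) = d"
    unfolding deltaH_def using inj_onD[OF inj] by (intro the_equality) auto
  then show ?thesis using d assms inj_onD[OF inj, of d t] by auto
qed

section \<open>The curve \<open>\<Gamma>\<^sub>\<theta>\<close> and its tangent at \<open>P\<^sub>\<theta>\<close>\<close>

locale angle_0_pi =
  fixes \<theta> :: real
  assumes theta_pos: "0 < \<theta>" and theta_less_pi: "\<theta> < pi"
begin

lemma sin_half_pos: "0 < sin (\<theta>/2)"
  using theta_pos theta_less_pi by (intro sin_gt_zero) auto

lemma cos_half_pos: "0 < cos (\<theta>/2)"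
  using theta_pos theta_less_pi by (intro cos_gt_zero) auto

definition ga :: real where "ga = Pcoef (\<theta>/2)"
definition gb :: real where "gb = 2 * Qcoef (\<theta>/2)"

lemma ga_pos: "0 < ga"
  unfolding ga_def using theta_pos theta_less_pi by (intro Pcoef_pos) auto

lemma gb_pos: "0 < gb"
  unfolding gb_def using theta_pos theta_less_pi Qcoef_pos[of "\<theta>/2"] by simp

lemma mem_Gamma_iff: "(x, v) \<in> Gamma \<theta> \<longleftrightarrow> 0 \<le> v \<and> x = ga * (v + 1) + gb * sqrt v"
proof -
  have "deltaH (x, v) = \<theta> \<longleftrightarrow> x = ga * (v + 1) + gb * sqrt v" if "0 \<le> v"
    using deltaH_eq_iff[OF that, of \<theta> x] fH_eq_coef[of \<theta> v] theta_pos theta_less_pi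
    by (auto simp: ga_def gb_def mult.commute)
  then show ?thesis unfolding Gamma_def Hplane_def by auto
qed

text \<open>Inverse of \<open>r \<mapsto> ga (r\<^sup>2 + 1) + gb r\<close> on \<open>r \<ge> 0\<close> by the quadratic formula, so that
  \<open>\<Gamma>\<^sub>\<theta>\<close> is the graph of \<open>(Gamma_root x)\<^sup>2\<close>, \<open>x \<ge> ga\<close>.\<close>
definition Gamma_root :: "real \<Rightarrow> real" where
  "Gamma_root x = (- gb + sqrt (gb\<^sup>2 + 4 * ga * (x - ga))) / (2 * ga)"

lemma Gamma_root_eq:
  assumes "0 \<le> r" "x = ga * (r\<^sup>2 + 1) + gb * r"
  shows "Gamma_root x = r"
proof -
  have "(2 * ga * r + gb)\<^sup>2 = gb\<^sup>2 + 4 * ga * (x - ga)"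
    using assms(2) by (simp add: power2_eq_square algebra_simps)
  then have "sqrt (gb\<^sup>2 + 4 * ga * (x - ga)) = 2 * ga * r + gb"
    using assms(1) ga_pos gb_pos by (intro real_sqrt_unique) auto
  then show ?thesis unfolding Gamma_root_def using ga_pos by simp
qed

lemma Gamma_root_mem:
  assumes "ga \<le> x"
  shows "(x, (Gamma_root x)\<^sup>2) \<in> Gamma \<theta>"
proof -
  define t where "t = sqrt (gb\<^sup>2 + 4 * ga * (x - ga))"
  have t2: "t\<^sup>2 = gb\<^sup>2 + 4 * ga * (x - ga)" unfolding t_def using assms ga_pos by simp
  have "gb \<le> t" unfolding t_def using assms ga_pos gb_pos by (intro real_le_rsqrt) simp
  then have r: "0 \<le> Gamma_root x" unfolding Gamma_root_def t_def[symmetric] using ga_pos by simp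
  have "ga * ((Gamma_root x)\<^sup>2 + 1) + gb * Gamma_root x = (t\<^sup>2 - gb\<^sup>2) / (4 * ga) + ga"
    unfolding Gamma_root_def t_def[symmetric] using ga_pos
    by (simp add: field_simps power2_eq_square)
  also have "\<dots> = x" using t2 ga_pos by simp
  finally have "x = ga * ((Gamma_root x)\<^sup>2 + 1) + gb * Gamma_root x" ..
  then show ?thesis using r by (simp add: mem_Gamma_iff)
qed

lemma Gamma_fun_eq:
  assumes "(x, v) \<in> Gamma \<theta>"
  shows "Gamma_fun \<theta> x = v"
  unfolding Gamma_fun_def
proof (rule the_equality)
  fix w assume "(x, w) \<in> Gamma \<theta>"
  then have "0 \<le> w" "x = ga * ((sqrt w)\<^sup>2 + 1) + gb * sqrt w"
    "0 \<le> v" "x = ga * ((sqrt v)\<^sup>2 + 1) + gb * sqrt v"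
    using assms unfolding mem_Gamma_iff by auto
  then have "sqrt w = sqrt v" using Gamma_root_eq by (metis real_sqrt_ge_zero)
  then show "w = v" by simp
qed (rule assms)

lemma Gamma_root_has_derivative:
  assumes "ga < x"
  shows "(Gamma_root has_real_derivative 1 / (2 * ga * Gamma_root x + gb)) (at x)"
proof -
  define q where "q = gb\<^sup>2 + 4 * ga * (x - ga)"
  have "0 < q" unfolding q_def using assms ga_pos by (simp add: add_nonneg_pos)
  have "(Gamma_root has_real_derivative (inverse (sqrt q) / 2 * (4 * ga)) / (2 * ga)) (at x)"
    unfolding Gamma_root_def[abs_def] q_def using \<open>0 < q\<close>[unfolded q_def]
    by (auto intro!: derivative_eq_intros)
  moreover have "2 * ga * Gamma_root x + gb = sqrt q"
    unfolding Gamma_root_def q_def using ga_pos by simp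
  ultimately show ?thesis using ga_pos by (simp add: divide_simps)
qed

lemma Gamma_fun_has_derivative:
  assumes "ga < x"
  shows "(Gamma_fun \<theta> has_real_derivative 2 * Gamma_root x / (2 * ga * Gamma_root x + gb)) (at x)"
proof -
  have "((\<lambda>x. (Gamma_root x)\<^sup>2) has_real_derivative 2 * Gamma_root x / (2 * ga * Gamma_root x + gb)) (at x)"
    using Gamma_root_has_derivative[OF assms] by (auto intro!: derivative_eq_intros)
  then show ?thesis
    by (rule has_field_derivative_transform_within_open[of _ _ _ "{ga<..}"])
       (use assms Gamma_fun_eq[OF Gamma_root_mem] in auto)
qed

lemma Gamma_param_at_cos_half:
  "ga * ((cos (\<theta>/2))\<^sup>2 + 1) + gb * cos (\<theta>/2) = (\<theta> + sin \<theta>) / 2"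
  using sin_half_pos sin_double[of "\<theta>/2"]
  unfolding ga_def gb_def Pcoef_def Qcoef_def
  by (simp add: divide_simps) (use sin_cos_squared_add[of "\<theta>/2"] in algebra)

lemma Gamma_param_deriv_at_cos_half: "2 * ga * cos (\<theta>/2) + gb = 2 * sin (\<theta>/2)"
  using sin_half_pos
  unfolding ga_def gb_def Pcoef_def Qcoef_def
  by (simp add: divide_simps) (use sin_cos_squared_add[of "\<theta>/2"] in algebra)

lemma Ptheta_in_Gamma: "Ptheta \<theta> \<in> Gamma \<theta>"
  using Gamma_param_at_cos_half cos_half_pos unfolding Ptheta_def mem_Gamma_iff by simp

lemma Gamma_root_at_Ptheta: "Gamma_root (fst (Ptheta \<theta>)) = cos (\<theta>/2)"
  using Gamma_param_at_cos_half cos_half_pos unfolding Ptheta_def by (intro Gamma_root_eq) auto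

lemma Gamma_fun_deriv_at_Ptheta:
  "(Gamma_fun \<theta> has_real_derivative cos (\<theta>/2) / sin (\<theta>/2)) (at (fst (Ptheta \<theta>)))"
proof -
  have "ga < ga * ((cos (\<theta>/2))\<^sup>2 + 1) + gb * cos (\<theta>/2)"
    using ga_pos gb_pos cos_half_pos by (simp add: algebra_simps add_nonneg_pos)
  then have "ga < fst (Ptheta \<theta>)"
    using Gamma_param_at_cos_half unfolding Ptheta_def by simp
  from Gamma_fun_has_derivative[OF this] show ?thesis
    unfolding Gamma_root_at_Ptheta Gamma_param_deriv_at_cos_half by simp
qed

lemma tangent_line_Int_Hplane: "tangent_line \<theta> \<inter> Hplane = Lline (\<theta>/2) (tan (\<theta>/2))"
proof -
  have "v = (cos (\<theta>/2))\<^sup>2 + cos (\<theta>/2) / sin (\<theta>/2) * (x - (\<theta> + sin \<theta>) / 2)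
      \<longleftrightarrow> x = \<theta>/2 + tan (\<theta>/2) * v" for x v
    using sin_double[of "\<theta>/2"] sin_half_pos cos_half_pos
    by (auto simp: tan_def field_simps power2_eq_square)
  then show ?thesis
    unfolding tangent_line_def Hplane_def Lline_def DERIV_imp_deriv[OF Gamma_fun_deriv_at_Ptheta]
    by (auto simp: Ptheta_def)
qed

section \<open>A calibration for the line \<open>L\<^bsub>\<theta>/2, tan(\<theta>/2)\<^esub>\<close>\<close>

text \<open>The calibration \<open>D(x, v) = \<surd>v \<cdot> calib_profile ((x - \<theta>/2) / v)\<close> is homogeneous under the
  dilations \<open>(x, v) \<mapsto> (\<theta>/2 + \<lambda>(x - \<theta>/2), \<lambda>v)\<close>, which fix \<open>L\<close> and scale \<open>d\<^sub>H\<close> by \<open>\<surd>\<lambda>\<close>.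
  Its gradient is \<open>(-cos \<omega>, sin \<omega>) / \<surd>v\<close> with \<open>\<omega> = slope_inv ((x - \<theta>/2) / v)\<close>; the profile is
  chosen to make the \<open>v\<close>-component come out right, which is \<open>calib_profile_identity\<close>.\<close>

definition slope :: "real \<Rightarrow> real" where
  "slope w = (2 * w - \<theta> + sin (2 * w)) / (2 * (cos w)\<^sup>2)"

lemma slope_has_derivative:
  assumes "cos w \<noteq> 0"
  shows "(slope has_real_derivative (2 * cos w + (2 * w - \<theta>) * sin w) / (cos w)^3) (at w)"
  unfolding slope_def[abs_def]
  apply (rule derivative_eq_intros refl)+
   apply (simp add: assms)
  using assms apply (simp add: divide_simps sin_double cos_double)
  using sin_cos_squared_add[of w] by algebra

lemma slope_deriv_numerator_pos:
  assumes "-(pi/2) < w" "w < pi/2"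
  shows "0 < 2 * cos w + (2 * w - \<theta>) * sin w"
proof -
  have "0 < cos w" using assms cos_gt_zero_pi by blast
  consider "w \<le> 0" | "0 < w" "\<theta> \<le> 2 * w" | "0 < w" "2 * w < \<theta>" by linarith
  then show ?thesis
  proof cases
    case 1
    then have "sin w \<le> 0" using sin_ge_zero[of "-w"] assms by simp
    then have "0 \<le> (2 * w - \<theta>) * sin w" using 1 theta_pos by (simp add: mult_nonpos_nonpos)
    then show ?thesis using \<open>0 < cos w\<close> by simp
  next
    case 2
    then have "0 \<le> (2 * w - \<theta>) * sin w" using assms by (simp add: sin_ge_zero)
    then show ?thesis using \<open>0 < cos w\<close> by simp
  next
    case 3
    define u where "u = pi/2 - w"
    have u: "0 < u" "u < pi" using assms 3 unfolding u_def by auto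
    have "sin w = cos u" "cos w = sin u" unfolding u_def by (simp_all add: cos_diff sin_diff)
    have "(\<theta> - 2 * w) * sin w < (pi - 2 * w) * sin w"
      using theta_less_pi 3 assms by (intro mult_strict_right_mono sin_gt_zero) auto
    also have "\<dots> = 2 * (u * cos u)" using \<open>sin w = cos u\<close> by (simp add: u_def algebra_simps)
    also have "\<dots> < 2 * sin u" using mult_cos_less_sin[OF u] by simp
    finally show ?thesis using \<open>cos w = sin u\<close> by (simp add: algebra_simps)
  qed
qed

lemma strict_mono_on_slope: "strict_mono_on {-(pi/2)<..<pi/2} slope"
proof (rule strict_mono_on_if_deriv_pos)
  fix w :: real assume w: "-(pi/2) < w" "w < pi/2"
  then show "\<exists>y. (slope has_real_derivative y) (at w) \<and> 0 < y"
    using slope_has_derivative[of w] slope_deriv_numerator_pos[OF w] cos_gt_zero_pi[OF w] by force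
qed

lemma slope_at_bot: "filterlim slope at_bot (at_right (-(pi/2)))"
proof -
  have "((\<lambda>w. 2 * w - \<theta> + sin (2 * w)) \<longlongrightarrow> - pi - \<theta>) (at_right (-(pi/2)))"
    by (auto intro!: tendsto_eq_intros)
  moreover have "- pi - \<theta> < 0" using theta_pos pi_gt_zero by linarith
  moreover have "filterlim (\<lambda>w::real. 1 / (2 * (cos w)\<^sup>2)) at_top (at_right (-(pi/2)))"
    by real_asymp
  ultimately have "filterlim (\<lambda>w. (2 * w - \<theta> + sin (2 * w)) * (1 / (2 * (cos w)\<^sup>2))) at_bot
      (at_right (-(pi/2)))"
    by (rule filterlim_tendsto_neg_mult_at_bot)
  then show ?thesis unfolding slope_def[abs_def] by simp
qed

lemma slope_at_top: "filterlim slope at_top (at_left (pi/2))"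
proof -
  have "((\<lambda>w. 2 * w - \<theta> + sin (2 * w)) \<longlongrightarrow> pi - \<theta>) (at_left (pi/2))"
    by (auto intro!: tendsto_eq_intros)
  moreover have "0 < pi - \<theta>" using theta_less_pi by simp
  moreover have "filterlim (\<lambda>w::real. 1 / (2 * (cos w)\<^sup>2)) at_top (at_left (pi/2))"
    by real_asymp
  ultimately have "filterlim (\<lambda>w. (2 * w - \<theta> + sin (2 * w)) * (1 / (2 * (cos w)\<^sup>2))) at_top
      (at_left (pi/2))"
    by (rule filterlim_tendsto_pos_mult_at_top)
  then show ?thesis unfolding slope_def[abs_def] by simp
qed

lemma continuous_on_slope: "continuous_on {-(pi/2)<..<pi/2} slope"
proof (rule continuous_at_imp_continuous_on, rule ballI)
  fix w :: real assume "w \<in> {-(pi/2)<..<pi/2}"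
  then have "cos w \<noteq> 0" using cos_gt_zero_pi by force
  from DERIV_isCont[OF slope_has_derivative[OF this]] show "isCont slope w" .
qed

lemma bij_betw_slope: "bij_betw slope {-(pi/2)<..<pi/2} UNIV"
proof (rule bij_betw_imageI)
  show "inj_on slope {-(pi/2)<..<pi/2}"
    by (rule strict_mono_on_imp_inj_on[OF strict_mono_on_slope])
  have "\<exists>w\<in>{-(pi/2)<..<pi/2}. slope w = s" for s
    using slope_at_bot slope_at_top
    by (intro IVT_open_interval continuous_on_slope)
       (auto simp: filterlim_at_bot_dense filterlim_at_top_dense)
  then show "slope ` {-(pi/2)<..<pi/2} = UNIV" by (metis (mono_tags, lifting) UNIV_eq_I rev_image_eqI)
qed

definition slope_inv :: "real \<Rightarrow> real" where
  "slope_inv = the_inv_into {-(pi/2)<..<pi/2} slope"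

lemma slope_inv_mem: "slope_inv s \<in> {-(pi/2)<..<pi/2}"
  using bij_betw_slope the_inv_into_into[of slope _ s "{-(pi/2)<..<pi/2}"]
  unfolding slope_inv_def bij_betw_def by auto

lemma slope_slope_inv: "slope (slope_inv s) = s"
  using bij_betw_slope unfolding slope_inv_def bij_betw_def by (auto intro: f_the_inv_into_f)

lemma slope_inv_slope: "w \<in> {-(pi/2)<..<pi/2} \<Longrightarrow> slope_inv (slope w) = w"
  using bij_betw_slope unfolding slope_inv_def bij_betw_def by (auto intro: the_inv_into_f_f)

lemma cos_slope_inv_pos: "0 < cos (slope_inv s)"
  using slope_inv_mem[of s] cos_gt_zero_pi by auto

lemma isCont_slope_inv: "isCont slope_inv s"
proof -
  define w where "w = slope_inv s"
  have w: "-(pi/2) < w" "w < pi/2" using slope_inv_mem unfolding w_def by auto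
  have "isCont slope_inv (slope w)"
  proof (rule isCont_inverse_function2[of "(-(pi/2) + w) / 2" w "(pi/2 + w) / 2"])
    fix z assume "(-(pi/2) + w) / 2 \<le> z" "z \<le> (pi/2 + w) / 2"
    then have z: "z \<in> {-(pi/2)<..<pi/2}" using w by auto
    then show "slope_inv (slope z) = z" by (rule slope_inv_slope)
    show "isCont slope z"
      using z cos_gt_zero_pi[of z] by (intro DERIV_isCont[OF slope_has_derivative]) auto
  qed (use w in auto)
  then show ?thesis unfolding w_def slope_slope_inv .
qed

lemma slope_inv_has_derivative:
  "(slope_inv has_real_derivative
     (cos (slope_inv s))^3 / (2 * cos (slope_inv s) + (2 * slope_inv s - \<theta>) * sin (slope_inv s))) (at s)"
proof -
  define w where "w = slope_inv s"
  have w: "-(pi/2) < w" "w < pi/2" using slope_inv_mem unfolding w_def by auto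
  have "(slope has_real_derivative (2 * cos w + (2 * w - \<theta>) * sin w) / (cos w)^3) (at (slope_inv s))"
    using slope_has_derivative cos_gt_zero_pi[OF w] unfolding w_def by auto
  then have "(slope_inv has_real_derivative inverse ((2 * cos w + (2 * w - \<theta>) * sin w) / (cos w)^3)) (at s)"
    using slope_deriv_numerator_pos[OF w] cos_gt_zero_pi[OF w]
    by (intro DERIV_inverse_function[of _ _ _ _ "s - 1" "s + 1"])
       (auto simp: slope_slope_inv isCont_slope_inv)
  then show ?thesis unfolding w_def by simp
qed

definition calib_profile :: "real \<Rightarrow> real" where
  "calib_profile s = (\<theta> - 2 * slope_inv s) / cos (slope_inv s)"

lemma calib_profile_has_derivative: "(calib_profile has_real_derivative - cos (slope_inv s)) (at s)"
proof -
  have c: "0 < cos (slope_inv s)" by (rule cos_slope_inv_pos)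
  have k: "0 < 2 * cos (slope_inv s) + (2 * slope_inv s - \<theta>) * sin (slope_inv s)"
    using slope_inv_mem by (intro slope_deriv_numerator_pos) auto
  show ?thesis
    unfolding calib_profile_def[abs_def]
    apply (rule derivative_eq_intros refl slope_inv_has_derivative)+
     apply (use c in simp)
    using c k by (simp add: divide_simps) algebra
qed

lemma calib_profile_identity: "calib_profile s / 2 + s * cos (slope_inv s) = sin (slope_inv s)"
proof -
  define w where "w = slope_inv s"
  have "s = slope w" unfolding w_def slope_slope_inv ..
  moreover have "0 < cos w" unfolding w_def by (rule cos_slope_inv_pos)
  ultimately show ?thesis
    unfolding calib_profile_def w_def[symmetric] slope_def sin_double
    by (simp add: field_simps power2_eq_square)
qed

lemma isCont_calib_profile: "isCont calib_profile s"
  using calib_profile_has_derivative by (rule DERIV_isCont)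

lemma calib_profile_start: "calib_profile (- \<theta>/2) = \<theta>"
proof -
  have "slope 0 = - \<theta>/2" unfolding slope_def by simp
  then have "slope_inv (- \<theta>/2) = 0" using slope_inv_slope[of 0] by simp
  then show ?thesis unfolding calib_profile_def by simp
qed

lemma calib_profile_on_line: "calib_profile (tan (\<theta>/2)) = 0"
proof -
  have "slope (\<theta>/2) = tan (\<theta>/2)"
    using cos_half_pos sin_double[of "\<theta>/2"] unfolding slope_def tan_def by (simp add: power2_eq_square)
  then have "slope_inv (tan (\<theta>/2)) = \<theta>/2"
    using slope_inv_slope[of "\<theta>/2"] theta_pos theta_less_pi by simp
  then show ?thesis unfolding calib_profile_def by simp
qed

definition calibration :: "real \<Rightarrow> real \<Rightarrow> real" where
  "calibration x v = sqrt v * calib_profile ((x - \<theta>/2) / v)"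

lemma calibration_has_derivative:
  assumes X: "(X has_real_derivative X') (at t)" and V: "(V has_real_derivative V') (at t)"
    and pos: "0 < V t"
  shows "((\<lambda>t. calibration (X t) (V t)) has_real_derivative
      (- cos (slope_inv ((X t - \<theta>/2) / V t)) * X' + sin (slope_inv ((X t - \<theta>/2) / V t)) * V')
        / sqrt (V t)) (at t)"
proof -
  define s where "s = (X t - \<theta>/2) / V t"
  define w where "w = slope_inv s"
  define q where "q = sqrt (V t)"
  have q: "0 < q" "V t = q\<^sup>2" unfolding q_def using pos by auto
  have deriv: "((\<lambda>t. calibration (X t) (V t)) has_real_derivative
      inverse q / 2 * V' * calib_profile s + q * (- cos w * ((X' * V t - (X t - \<theta>/2) * V') / (V t * V t))))
      (at t)"
    unfolding calibration_def q_def s_def w_def using pos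
    by (auto intro!: derivative_eq_intros X V DERIV_chain2[OF calib_profile_has_derivative])
  have profile: "calib_profile s = 2 * (sin w - s * cos w)"
    using calib_profile_identity[of s] unfolding w_def by simp
  have "X t - \<theta>/2 = s * q\<^sup>2" unfolding s_def using q by simp
  then have "inverse q / 2 * V' * calib_profile s
      + q * (- cos w * ((X' * V t - (X t - \<theta>/2) * V') / (V t * V t)))
      = (- cos w * X' + sin w * V') / q"
    unfolding profile using q by (simp add: field_simps power2_eq_square)
  with deriv show ?thesis unfolding s_def[symmetric] w_def[symmetric] q_def[symmetric] by simp
qed

lemma continuous_on_calibration_lifted:
  assumes "continuous_on S g" "\<And>t. t \<in> S \<Longrightarrow> 0 \<le> snd (g t)" "0 < \<epsilon>"
  shows "continuous_on S (\<lambda>t. calibration (fst (g t)) (snd (g t) + \<epsilon>))"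
proof -
  have "continuous_on S (\<lambda>t. (fst (g t) - \<theta>/2) / (snd (g t) + \<epsilon>))"
    using assms by (intro continuous_intros) (auto simp: add_nonneg_pos less_imp_neq[symmetric])
  then have "continuous_on S (\<lambda>t. calib_profile ((fst (g t) - \<theta>/2) / (snd (g t) + \<epsilon>)))"
    by (rule continuous_on_compose2[OF continuous_at_imp_continuous_on[OF ballI[OF isCont_calib_profile]]])
       auto
  then show ?thesis unfolding calibration_def using assms(1) by (intro continuous_intros)
qed

lemma calibration_drop_le_hlen:
  assumes pc: "g piecewise_C1_differentiable_on {0..1}" and in_H: "\<forall>t\<in>{0..1}. g t \<in> Hplane"
    and eps: "0 < \<epsilon>"
  shows "ennreal (calibration (fst (g 0)) (snd (g 0) + \<epsilon>) - calibration (fst (g 1)) (snd (g 1) + \<epsilon>))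
           \<le> hlen g"
proof -
  obtain K where cont: "continuous_on {0..1} g" and K: "finite K"
    and C1: "g C1_differentiable_on ({0..1} - K)"
    using pc unfolding piecewise_C1_differentiable_on_def by blast
  define V where "V t = snd (g t) + \<epsilon>" for t
  define w where "w t = slope_inv ((fst (g t) - \<theta>/2) / V t)" for t
  define F where "F t = calibration (fst (g t)) (V t)" for t
  define F' where "F' t = (- cos (w t) * fst (vector_derivative g (at t))
      + sin (w t) * snd (vector_derivative g (at t))) / sqrt (V t)" for t
  have v_nonneg: "0 \<le> snd (g t)" if "t \<in> {0..1}" for t
    using in_H that unfolding Hplane_def by auto
  then have V_pos: "0 < V t" if "t \<in> {0..1}" for t
    using eps that unfolding V_def by (simp add: add_nonneg_pos)
  have F_deriv: "(F has_vector_derivative F' t) (at t)" if t: "t \<in> {0<..<1} - K" for t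
  proof -
    have "(g has_vector_derivative vector_derivative g (at t)) (at t)"
      using C1 t unfolding C1_differentiable_on_eq by (auto intro: vector_derivative_works[THEN iffD1])
    then have "((\<lambda>t. fst (g t)) has_real_derivative fst (vector_derivative g (at t))) (at t)"
      "(V has_real_derivative snd (vector_derivative g (at t))) (at t)"
      unfolding V_def[abs_def]
      by (auto intro!: derivative_eq_intros has_vector_derivative_fst has_vector_derivative_snd)
    from calibration_has_derivative[OF this V_pos] t show ?thesis
      unfolding F_def[abs_def] F'_def w_def by (simp add: has_real_derivative_iff_has_vector_derivative)
  qed
  have F_cont: "continuous_on {0..1} F"
    unfolding F_def V_def using cont v_nonneg eps by (rule continuous_on_calibration_lifted)
  have "(F' has_integral F 1 - F 0) {0..1}"
    by (rule fundamental_theorem_of_calculus_interior_strong[OF K _ _ F_cont]) (use F_deriv in auto)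
  then have "((\<lambda>t. - F' t) has_integral F 0 - F 1) {0..1}"
    using has_integral_neg by force
  moreover have "ennreal (- F' t) \<le> hspeed g t" if "t \<in> {0..1} - K" for t
  proof -
    have "- F' t = (cos (w t) * fst (vector_derivative g (at t))
        + (- sin (w t)) * snd (vector_derivative g (at t))) / sqrt (snd (g t) + \<epsilon>)"
      unfolding F'_def V_def by (simp add: minus_divide_left)
    then show ?thesis
      using hspeed_ge_unit_rate[of g t \<epsilon> "cos (w t)" "- sin (w t)"] v_nonneg that eps by simp
  qed
  ultimately have "ennreal (F 0 - F 1) \<le> hlen g"
    unfolding hlen_eq_nn_integral_hspeed by (rule has_integral_le_nn_integral[OF _ K])
  then show ?thesis unfolding F_def V_def .
qed

lemma calibration_tendsto_start: "((\<lambda>e. calibration 0 (1 + e)) \<longlongrightarrow> \<theta>) (at_right 0)"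
proof -
  have "((\<lambda>e. sqrt (1 + e) * calib_profile ((0 - \<theta>/2) / (1 + e)))
      \<longlongrightarrow> sqrt (1 + 0) * calib_profile ((0 - \<theta>/2) / (1 + 0))) (at_right 0)"
    by (intro tendsto_intros isCont_tendsto_compose[OF isCont_calib_profile]) auto
  then show ?thesis unfolding calibration_def using calib_profile_start by simp
qed

lemma calibration_tendsto_line:
  assumes "p \<in> Lline (\<theta>/2) (tan (\<theta>/2))"
  shows "((\<lambda>e. calibration (fst p) (snd p + e)) \<longlongrightarrow> 0) (at_right 0)"
proof (cases "snd p = 0")
  case True
  then have "calibration (fst p) (snd p + e) = sqrt e * calib_profile 0" for e
    using assms unfolding calibration_def Lline_def by auto
  moreover have "((\<lambda>e. sqrt e * calib_profile 0) \<longlongrightarrow> sqrt 0 * calib_profile 0) (at_right 0)"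
    by (intro tendsto_intros)
  ultimately show ?thesis by simp
next
  case False
  then have p: "0 < snd p" "(fst p - \<theta>/2) / snd p = tan (\<theta>/2)"
    using assms unfolding Lline_def by auto
  have "((\<lambda>e. sqrt (snd p + e) * calib_profile ((fst p - \<theta>/2) / (snd p + e)))
      \<longlongrightarrow> sqrt (snd p + 0) * calib_profile ((fst p - \<theta>/2) / (snd p + 0))) (at_right 0)"
    using p by (intro tendsto_intros isCont_tendsto_compose[OF isCont_calib_profile]) auto
  then show ?thesis unfolding calibration_def using p calib_profile_on_line by simp
qed

lemma theta_le_hlen:
  assumes pc: "g piecewise_C1_differentiable_on {0..1}" and in_H: "\<forall>t\<in>{0..1}. g t \<in> Hplane"
    and start: "g 0 = (0, 1)" and on_line: "g 1 \<in> Lline (\<theta>/2) (tan (\<theta>/2))"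
  shows "ennreal \<theta> \<le> hlen g"
proof (cases "hlen g")
  case (real L)
  have "calibration 0 (1 + e) - calibration (fst (g 1)) (snd (g 1) + e) \<le> L" if "0 < e" for e
    using calibration_drop_le_hlen[OF pc in_H that] real start by (auto simp: ennreal_le_iff2)
  then have "\<theta> - 0 \<le> L"
    by (intro tendsto_le[OF _ tendsto_const tendsto_diff[OF calibration_tendsto_start
          calibration_tendsto_line[OF on_line]]])
       (auto simp: eventually_at_right_field intro: exI[of _ 1])
  then show ?thesis using real by simp
qed simp

section \<open>The cycloid\<close>

definition cycloid :: "real \<Rightarrow> real \<times> real" where
  "cycloid t = ((\<theta> * t + sin (\<theta> * t)) / 2, (1 + cos (\<theta> * t)) / 2)"

lemma cycloid_has_vector_derivative:
  "(cycloid has_vector_derivative (\<theta> * (1 + cos (\<theta> * t)) / 2, - \<theta> * sin (\<theta> * t) / 2)) (at t)"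
  unfolding cycloid_def[abs_def]
  by (intro has_vector_derivative_Pair)
     (auto intro!: derivative_eq_intros simp: has_real_derivative_iff_has_vector_derivative[symmetric]
       algebra_simps)

lemma cycloid_piecewise_C1: "cycloid piecewise_C1_differentiable_on {0..1}"
proof (rule C1_differentiable_imp_piecewise)
  show "cycloid C1_differentiable_on {0..1}"
    unfolding C1_differentiable_on_def
    by (intro exI[of _ "\<lambda>t. (\<theta> * (1 + cos (\<theta> * t)) / 2, - \<theta> * sin (\<theta> * t) / 2)"] conjI ballI
        cycloid_has_vector_derivative) (auto intro!: continuous_intros)
qed

lemma cycloid_height_pos:
  assumes "t \<in> {0..1}"
  shows "0 < snd (cycloid t)"
proof -
  have "\<theta> * t \<le> \<theta>" using assms theta_pos by (intro mult_left_le) auto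
  then have "\<theta> * t < pi" using theta_less_pi by linarith
  moreover have "0 \<le> \<theta> * t" using assms theta_pos by simp
  ultimately have "cos pi < cos (\<theta> * t)" by (intro cos_monotone_0_pi) auto
  then show ?thesis unfolding cycloid_def by simp
qed

lemma hspeed_cycloid:
  assumes "t \<in> {0..1}"
  shows "hspeed cycloid t = \<theta>"
proof -
  define c where "c = cos (\<theta> * t)"
  have v: "0 < (1 + c) / 2" using cycloid_height_pos[OF assms] unfolding cycloid_def c_def by simp
  have "norm (\<theta> * (1 + c) / 2, - \<theta> * sin (\<theta> * t) / 2) = sqrt (\<theta>\<^sup>2 * ((1 + c) / 2))"
  proof -
    have "(\<theta> * (1 + c) / 2)\<^sup>2 + (- \<theta> * sin (\<theta> * t) / 2)\<^sup>2 = \<theta>\<^sup>2 * ((1 + c) / 2)"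
      unfolding c_def
      by (simp add: power2_eq_square field_simps) (use sin_cos_squared_add[of "\<theta> * t"] in algebra)
    then show ?thesis by (simp add: norm_Pair power_divide)
  qed
  also have "\<dots> = \<theta> * sqrt ((1 + c) / 2)" using theta_pos by (subst real_sqrt_mult) simp
  finally show ?thesis
    using v theta_pos vector_derivative_at[OF cycloid_has_vector_derivative[of t]]
    unfolding hspeed_def Let_def cycloid_def c_def by simp
qed

lemma hlen_cycloid: "hlen cycloid = ennreal \<theta>"
proof -
  have "hlen cycloid = (\<integral>\<^sup>+ t. ennreal \<theta> * indicator {0..1::real} t \<partial>lborel)"
    unfolding hlen_eq_nn_integral_hspeed
    by (intro nn_integral_cong) (simp add: hspeed_cycloid split: split_indicator)
  then show ?thesis by (simp add: nn_integral_cmult_indicator)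
qed

lemma dH_to_Ptheta_le: "dH (0, 1) (Ptheta \<theta>) \<le> ennreal \<theta>"
proof -
  have "cycloid 1 = Ptheta \<theta>"
    using cos_double[of "\<theta>/2"] unfolding cycloid_def Ptheta_def by (simp add: sin_squared_eq)
  moreover have "cycloid 0 = (0, 1)" "\<forall>t\<in>{0..1}. cycloid t \<in> Hplane"
    using cycloid_height_pos unfolding cycloid_def Hplane_def by (auto simp: less_imp_le)
  ultimately have "dH (0, 1) (Ptheta \<theta>) \<le> hlen cycloid"
    unfolding dH_def using cycloid_piecewise_C1 by (intro INF_lower) auto
  then show ?thesis unfolding hlen_cycloid .
qed

lemma Ptheta_on_line: "Ptheta \<theta> \<in> Lline (\<theta>/2) (tan (\<theta>/2))"
  using cos_half_pos sin_double[of "\<theta>/2"]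
  unfolding Lline_def Ptheta_def tan_def by (simp add: power2_eq_square)

lemma INF_dH_line: "(INF P \<in> Lline (\<theta>/2) (tan (\<theta>/2)). dH (0, 1) P) = ennreal \<theta>"
proof (rule antisym)
  show "(INF P \<in> Lline (\<theta>/2) (tan (\<theta>/2)). dH (0, 1) P) \<le> ennreal \<theta>"
    using Ptheta_on_line dH_to_Ptheta_le by (rule INF_lower2)
  show "ennreal \<theta> \<le> (INF P \<in> Lline (\<theta>/2) (tan (\<theta>/2)). dH (0, 1) P)"
    unfolding dH_def using theta_le_hlen by (auto intro!: INF_greatest)
qed

end

theorem theorem5p1:
  fixes \<theta> :: real
  assumes "0 < \<theta>" and "\<theta> < pi"
  shows "Ptheta \<theta> \<in> Gamma \<theta>
    \<and> Gamma_fun \<theta> differentiable (at (fst (Ptheta \<theta>)))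
    \<and> (INF P \<in> tangent_line \<theta> \<inter> Hplane. dH (0, 1) P) = ennreal \<theta>
    \<and> tangent_line \<theta> \<inter> Hplane = Lline (\<theta>/2) (tan (\<theta>/2))"
proof -
  interpret angle_0_pi \<theta> using assms by unfold_locales
  show ?thesis
    using Ptheta_in_Gamma Gamma_fun_deriv_at_Ptheta tangent_line_Int_Hplane INF_dH_line
    by (auto simp: real_differentiable_def)
qed

end
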